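(* Let $G$ be a graph and let $c_1,\ldots,c_m$ be proper colorings of $G$. For any choice of positive integers $d_1,\ldots,d_m$ with $d_1+\cdots+d_m=\operatorname{ind}(\operatorname{Hom}(K_2,G))$, there exists a complete bipartite subgraph of $G$ that, for each $i\in[m]$, contains a subgraph isomorphic to $K_{\lceil d_i/2\rceil+1,\lfloor d_i/2\rfloor+1}$ which is colorful with respect to $c_i$ (i.e., whose vertices receive pairwise distinct colors under $c_i$).
   Context: For a graph $G=(V,E)$, $\operatorname{Hom}(K_2,G)$ is the poset whose elements are the pairs $(A,B)$ of non-empty disjoint subsets of $V$ such that every vertex of $A$ is adjacent to every vertex of $B$, ordered by $(A,B)\preceq(A',B')$ iff $A\subseteq A'$ and $B\subseteq B'$; it is identified with its order complex (vertices are poset elements, simplices are chains), which carries the free $\mathbb{Z}_2$-action $(A,B)\mapsto(B,A)$. The $\mathbb{Z}_2$-index $\operatorname{ind}(\mathsf{K})$ of a free simplicial $\mathbb{Z}_2$-complex $\mathsf{K}$ is the minimal $d$ such that there is a continuous map from $\mathsf{K}$ to $\mathcal{S}^d$ commuting with the $\mathbb{Z}_2$-actions (antipodal map on $\mathcal{S}^d$). *)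

theory Defs
  imports "HOL-Analysis.Analysis"
begin

definition simple_graph :: "'v set \<Rightarrow> ('v \<Rightarrow> 'v \<Rightarrow> bool) \<Rightarrow> bool" where
  "simple_graph V E \<longleftrightarrow> finite V \<and> (\<forall>u v. E u v \<longrightarrow> u \<in> V \<and> v \<in> V)
     \<and> (\<forall>u v. E u v \<longrightarrow> E v u) \<and> (\<forall>v. \<not> E v v)"

definition proper_coloring :: "'v set \<Rightarrow> ('v \<Rightarrow> 'v \<Rightarrow> bool) \<Rightarrow> ('v \<Rightarrow> 'c) \<Rightarrow> bool" where
  "proper_coloring V E c \<longleftrightarrow> (\<forall>u\<in>V. \<forall>v\<in>V. E u v \<longrightarrow> c u \<noteq> c v)"

definition HomK2 :: "'v set \<Rightarrow> ('v \<Rightarrow> 'v \<Rightarrow> bool) \<Rightarrow> ('v set \<times> 'v set) set" where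
  "HomK2 V E = {(A,B). A \<noteq> {} \<and> B \<noteq> {} \<and> A \<subseteq> V \<and> B \<subseteq> V \<and> A \<inter> B = {}
                       \<and> (\<forall>a\<in>A. \<forall>b\<in>B. E a b)}"

definition hom_le :: "'v set \<times> 'v set \<Rightarrow> 'v set \<times> 'v set \<Rightarrow> bool" where
  "hom_le p q \<longleftrightarrow> fst p \<subseteq> fst q \<and> snd p \<subseteq> snd q"

definition is_chain_in :: "('a \<Rightarrow> 'a \<Rightarrow> bool) \<Rightarrow> 'a set \<Rightarrow> bool" where
  "is_chain_in le S \<longleftrightarrow> (\<forall>x\<in>S. \<forall>y\<in>S. le x y \<or> le y x)"

text \<open>Geometric realization of the order complex of a finite poset (P, le): points are
  barycentric coordinate functions supported on P whose support is a chain (a simplex).\<close>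
definition order_complex_points :: "'a set \<Rightarrow> ('a \<Rightarrow> 'a \<Rightarrow> bool) \<Rightarrow> ('a \<Rightarrow> real) set" where
  "order_complex_points P le = {x. (\<forall>p. 0 \<le> x p) \<and> (\<forall>p. p \<notin> P \<longrightarrow> x p = 0)
       \<and> sum x P = 1 \<and> is_chain_in le {p\<in>P. 0 < x p}}"

definition order_complex_top :: "'a set \<Rightarrow> ('a \<Rightarrow> 'a \<Rightarrow> bool) \<Rightarrow> ('a \<Rightarrow> real) topology" where
  "order_complex_top P le = subtopology (powertop_real UNIV) (order_complex_points P le)"

definition HomK2_top :: "'v set \<Rightarrow> ('v \<Rightarrow> 'v \<Rightarrow> bool) \<Rightarrow> (('v set \<times> 'v set) \<Rightarrow> real) topology" where
  "HomK2_top V E = order_complex_top (HomK2 V E) hom_le"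

definition HomK2_swap :: "(('v set \<times> 'v set) \<Rightarrow> real) \<Rightarrow> (('v set \<times> 'v set) \<Rightarrow> real)" where
  "HomK2_swap x = (\<lambda>(A,B). x (B,A))"

definition antipodal :: "(nat \<Rightarrow> real) \<Rightarrow> (nat \<Rightarrow> real)" where
  "antipodal y = (\<lambda>i. - y i)"

text \<open>Z_2-index: least d such that there is a Z_2-equivariant continuous map into S^d;
  by the standard convention the index of the empty complex is -1.\<close>
definition z2_index :: "'a topology \<Rightarrow> ('a \<Rightarrow> 'a) \<Rightarrow> int" where
  "z2_index X \<nu> = (if topspace X = {} then -1 else
     int (LEAST d. \<exists>f. continuous_map X (nsphere d) f
                        \<and> (\<forall>x\<in>topspace X. f (\<nu> x) = antipodal (f x))))"

definition ind_HomK2 :: "'v set \<Rightarrow> ('v \<Rightarrow> 'v \<Rightarrow> bool) \<Rightarrow> int" where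
  "ind_HomK2 V E = z2_index (HomK2_top V E) HomK2_swap"

definition complete_bipartite_sub :: "'v set \<Rightarrow> ('v \<Rightarrow> 'v \<Rightarrow> bool) \<Rightarrow> 'v set \<Rightarrow> 'v set \<Rightarrow> bool" where
  "complete_bipartite_sub V E X Y \<longleftrightarrow> X \<noteq> {} \<and> Y \<noteq> {} \<and> X \<subseteq> V \<and> Y \<subseteq> V \<and> X \<inter> Y = {}
     \<and> (\<forall>x\<in>X. \<forall>y\<in>Y. E x y)"

definition contains_colorful_Kpq ::
  "'v set \<Rightarrow> 'v set \<Rightarrow> nat \<Rightarrow> nat \<Rightarrow> ('v \<Rightarrow> 'c) \<Rightarrow> bool" where
  "contains_colorful_Kpq X Y p q c \<longleftrightarrow> (\<exists>X' Y'. X' \<subseteq> X \<and> Y' \<subseteq> Y \<and>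
      ((card X' = p \<and> card Y' = q) \<or> (card X' = q \<and> card Y' = p)) \<and>
      inj_on c (X' \<union> Y'))"

end

theory Submission
  imports Defs
begin

text \<open>If no complete bipartite subgraph has all the required colourful subgraphs, every
  element \<open>(A,B)\<close> of Hom(K_2,G) has a first colouring \<open>c\<^sub>i\<close> that fails. Since \<open>c\<^sub>i\<close> is proper,
  the colour sets of \<open>A\<close> and \<open>B\<close> are disjoint, and failure bounds their sizes \<open>a, b\<close> so that the
  level \<open>2a - 1\<close> (if \<open>a = b\<close>) or \<open>2 min a b\<close> lies in \<open>[1, d\<^sub>i]\<close>. Placing the levels of colouring \<open>i\<close>
  in the \<open>i\<close>-th block of \<open>d\<^sub>i\<close> coordinates and choosing a sign that flips under \<open>(A,B) \<mapsto> (B,A)\<close>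
  (larger side first, ties broken by the least colour) labels the poset by the vertices \<open>\<plusminus>e\<^sub>k\<close>.
  Along a chain the colour counts only grow and the parity of the level records whether they are
  equal, so comparable elements with the same label get the same sign. This yields a
  \<open>\<int>\<^sub>2\<close>-map into the boundary of the cross-polytope in dimension \<open>d\<^sub>1 + \<dots> + d\<^sub>m\<close>, i.e. into a
  sphere of dimension one less than the index.\<close>

lemma obtain_subset_injective_on:
  assumes "finite A" "k \<le> card (c ` A)"
  obtains X where "X \<subseteq> A" "card X = k" "inj_on c X"
proof -
  obtain S where S: "S \<subseteq> c ` A" "card S = k"
    using obtain_subset_with_card_n[OF assms(2)] by metis
  define X where "X = inv_into A c ` S"
  have "X \<subseteq> A" "c ` X = S"
    using S(1) by (auto simp: X_def image_image f_inv_into_f subset_iff inv_into_into)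
  moreover have "card X = k"
    using S inj_on_inv_into[OF S(1)] by (simp add: X_def card_image)
  moreover have "finite X"
    using \<open>X \<subseteq> A\<close> assms(1) finite_subset by blast
  ultimately show thesis
    using that eq_card_imp_inj_on[of X c] S(2) by simp
qed

lemma contains_colorful_KpqI:
  assumes "finite A" "finite B" "c ` A \<inter> c ` B = {}"
    and "p \<le> card (c ` A)" "q \<le> card (c ` B)"
  shows "contains_colorful_Kpq A B p q c"
proof -
  obtain X where X: "X \<subseteq> A" "card X = p" "inj_on c X"
    using obtain_subset_injective_on[OF assms(1,4)] .
  obtain Y where Y: "Y \<subseteq> B" "card Y = q" "inj_on c Y"
    using obtain_subset_injective_on[OF assms(2,5)] .
  have "inj_on c (X \<union> Y)"
    using X Y assms(3) by (auto simp: inj_on_Un)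
  with X Y show ?thesis
    unfolding contains_colorful_Kpq_def by blast
qed

lemma contains_colorful_Kpq_commute:
  "contains_colorful_Kpq A B p q c = contains_colorful_Kpq B A p q c"
  unfolding contains_colorful_Kpq_def by (metis Un_commute)

lemma nat_ceiling_half: "nat \<lceil>real n / 2\<rceil> = (n + 1) div 2"
proof -
  have "\<lceil>real n / 2\<rceil> = - (- int n div 2)"
    using ceiling_divide_eq_div[of "int n" 2] by simp
  also have "\<dots> = int ((n + 1) div 2)"
    by presburger
  finally show ?thesis by simp
qed

lemma nat_floor_half: "nat \<lfloor>real n / 2\<rfloor> = n div 2"
  using floor_divide_of_nat_eq[of n 2, where 'a=real] by simp

definition pair_level :: "nat \<Rightarrow> nat \<Rightarrow> nat" where
  "pair_level a b = (if a = b then 2 * a - 1 else 2 * min a b)"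

lemma pair_level_commute: "pair_level a b = pair_level b a"
  by (simp add: pair_level_def min.commute)

lemma pair_level_ge_1: "1 \<le> a \<Longrightarrow> 1 \<le> b \<Longrightarrow> 1 \<le> pair_level a b"
  by (auto simp: pair_level_def min_def)

lemma pair_level_le:
  assumes "\<not> ((n + 1) div 2 + 1 \<le> a \<and> n div 2 + 1 \<le> b)"
    and "\<not> (n div 2 + 1 \<le> a \<and> (n + 1) div 2 + 1 \<le> b)"
  shows "pair_level a b \<le> n"
  using assms by (auto simp: pair_level_def)

lemma pair_level_eq_imp_same_shape:
  assumes "a \<le> a'" "b \<le> b'" "1 \<le> a" "pair_level a b = pair_level a' b'"
  shows "(a = b \<longrightarrow> a' = a \<and> b' = b) \<and> (a < b \<longleftrightarrow> a' < b') \<and> (b < a \<longleftrightarrow> b' < a')"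
  using assms unfolding pair_level_def by (auto split: if_splits)

lemma z2_index_le:
  assumes "continuous_map X (nsphere n) f"
    and "\<And>x. x \<in> topspace X \<Longrightarrow> f (\<nu> x) = antipodal (f x)"
  shows "z2_index X \<nu> \<le> int n"
proof (cases "topspace X = {}")
  case False
  have "(LEAST d. \<exists>f. continuous_map X (nsphere d) f
                  \<and> (\<forall>x\<in>topspace X. f (\<nu> x) = antipodal (f x))) \<le> n"
    using assms by (intro Least_le) blast
  with False show ?thesis
    by (simp add: z2_index_def)
qed (simp add: z2_index_def)

lemma continuous_map_normalize_nsphere:
  assumes cont: "\<And>k. continuous_map X euclideanreal (\<lambda>x. g x k)"
    and vanish: "\<And>x k. x \<in> topspace X \<Longrightarrow> n < k \<Longrightarrow> g x k = 0"
    and nonzero: "\<And>x. x \<in> topspace X \<Longrightarrow> \<exists>k\<le>n. g x k \<noteq> 0"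
  shows "continuous_map X (nsphere n) (\<lambda>x k. g x k / sqrt (\<Sum>j\<le>n. (g x j)\<^sup>2))"
proof -
  let ?r = "\<lambda>x. sqrt (\<Sum>j\<le>n. (g x j)\<^sup>2)"
  have pos: "?r x \<noteq> 0" if x: "x \<in> topspace X" for x
  proof -
    obtain k where "k \<le> n" "g x k \<noteq> 0"
      using nonzero[OF x] by blast
    then have "0 < (\<Sum>j\<le>n. (g x j)\<^sup>2)"
      by (intro sum_pos2[of _ k]) auto
    then show ?thesis by simp
  qed
  have "continuous_map X euclideanreal ?r"
    by (intro continuous_intros cont) simp
  then have "continuous_map X euclideanreal (\<lambda>x. g x k / ?r x)" for k
    using pos by (intro continuous_intros cont) blast
  moreover have "(\<Sum>j\<le>n. (g x j / ?r x)\<^sup>2) = 1" if "x \<in> topspace X" for x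
    using pos[OF that] by (simp add: power_divide sum_divide_distrib[symmetric] sum_nonneg)
  ultimately show ?thesis
    unfolding nsphere continuous_map_in_subtopology
    by (auto simp: continuous_map_componentwise_UNIV vanish)
qed

definition cross_polytope_vertex :: "('a \<Rightarrow> nat) \<Rightarrow> ('a \<Rightarrow> bool) \<Rightarrow> 'a \<Rightarrow> nat \<Rightarrow> real" where
  "cross_polytope_vertex \<kappa> \<sigma> p k = (if k = \<kappa> p then if \<sigma> p then 1 else -1 else 0)"

definition cross_polytope_map ::
  "'a set \<Rightarrow> ('a \<Rightarrow> nat) \<Rightarrow> ('a \<Rightarrow> bool) \<Rightarrow> ('a \<Rightarrow> real) \<Rightarrow> nat \<Rightarrow> real" where
  "cross_polytope_map P \<kappa> \<sigma> x k = (\<Sum>p\<in>P. x p * cross_polytope_vertex \<kappa> \<sigma> p k)"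

lemma cross_polytope_map_nonzero:
  assumes "finite P" and x: "x \<in> order_complex_points P le" and p: "p \<in> P" "0 < x p"
    and chain: "\<And>p q. p \<in> P \<Longrightarrow> q \<in> P \<Longrightarrow> le p q \<Longrightarrow> \<kappa> p = \<kappa> q \<Longrightarrow> \<sigma> p = \<sigma> q"
  shows "cross_polytope_map P \<kappa> \<sigma> x (\<kappa> p) \<noteq> 0"
proof -
  let ?s = "if \<sigma> p then 1 else -1 :: real"
  have x_nonneg: "\<And>q. 0 \<le> x q" and supp_chain: "is_chain_in le {q\<in>P. 0 < x q}"
    using x by (auto simp: order_complex_points_def)
  have "0 \<le> ?s * (x q * cross_polytope_vertex \<kappa> \<sigma> q (\<kappa> p))" if "q \<in> P" for q
  proof (cases "0 < x q \<and> \<kappa> q = \<kappa> p")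
    case True
    then have "le p q \<or> le q p"
      using supp_chain p \<open>q \<in> P\<close> unfolding is_chain_in_def by blast
    then have "\<sigma> q = \<sigma> p"
      using chain p(1) \<open>q \<in> P\<close> True by metis
    then show ?thesis
      using x_nonneg[of q] by (simp add: cross_polytope_vertex_def)
  next
    case False
    then have "x q = 0 \<or> \<kappa> q \<noteq> \<kappa> p"
      using x_nonneg[of q] by linarith
    then show ?thesis
      by (auto simp: cross_polytope_vertex_def)
  qed
  moreover have "0 < ?s * (x p * cross_polytope_vertex \<kappa> \<sigma> p (\<kappa> p))"
    using p by (simp add: cross_polytope_vertex_def)
  ultimately have "0 < ?s * cross_polytope_map P \<kappa> \<sigma> x (\<kappa> p)"
    unfolding cross_polytope_map_def sum_distrib_left using assms(1) p(1) by (intro sum_pos2) auto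
  then show ?thesis by auto
qed

lemma cross_polytope_map_comp_involution:
  assumes "\<And>p. p \<in> P \<Longrightarrow> \<nu> p \<in> P" "\<And>p. p \<in> P \<Longrightarrow> \<nu> (\<nu> p) = p"
    and "\<And>p. p \<in> P \<Longrightarrow> \<kappa> (\<nu> p) = \<kappa> p" "\<And>p. p \<in> P \<Longrightarrow> \<sigma> (\<nu> p) \<longleftrightarrow> \<not> \<sigma> p"
  shows "cross_polytope_map P \<kappa> \<sigma> (x \<circ> \<nu>) k = - cross_polytope_map P \<kappa> \<sigma> x k"
proof -
  have "cross_polytope_map P \<kappa> \<sigma> (x \<circ> \<nu>) k
      = (\<Sum>p\<in>P. - (x (\<nu> p) * cross_polytope_vertex \<kappa> \<sigma> (\<nu> p) k))"
    unfolding cross_polytope_map_def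
    by (intro sum.cong) (auto simp: assms cross_polytope_vertex_def)
  also have "\<dots> = (\<Sum>p\<in>P. - (x p * cross_polytope_vertex \<kappa> \<sigma> p k))"
    by (rule sum.reindex_bij_witness[of _ \<nu> \<nu>]) (auto simp: assms)
  finally show ?thesis
    by (simp add: cross_polytope_map_def sum_negf)
qed

text \<open>The labels define a \<open>\<int>\<^sub>2\<close>-poset map into the faces of the boundary of the
  \<open>N\<close>-dimensional cross-polytope: the chain condition says that no simplex of the order
  complex meets two opposite vertices \<open>\<plusminus>e\<^sub>k\<close>, so the affine extension misses the origin.\<close>
lemma z2_index_order_complex_less:
  fixes \<nu> :: "'a \<Rightarrow> 'a" and \<kappa> :: "'a \<Rightarrow> nat" and \<sigma> :: "'a \<Rightarrow> bool"
  assumes "finite P"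
    and \<nu>: "\<And>p. p \<in> P \<Longrightarrow> \<nu> p \<in> P" "\<And>p. p \<in> P \<Longrightarrow> \<nu> (\<nu> p) = p"
    and \<kappa>: "\<And>p. p \<in> P \<Longrightarrow> \<kappa> p < N" "\<And>p. p \<in> P \<Longrightarrow> \<kappa> (\<nu> p) = \<kappa> p"
    and \<sigma>: "\<And>p. p \<in> P \<Longrightarrow> \<sigma> (\<nu> p) \<longleftrightarrow> \<not> \<sigma> p"
    and chain: "\<And>p q. p \<in> P \<Longrightarrow> q \<in> P \<Longrightarrow> le p q \<Longrightarrow> \<kappa> p = \<kappa> q \<Longrightarrow> \<sigma> p = \<sigma> q"
  shows "z2_index (order_complex_top P le) (\<lambda>x. x \<circ> \<nu>) < int N"
proof (cases "topspace (order_complex_top P le) = {}")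
  case True
  then show ?thesis by (simp add: z2_index_def)
next
  case False
  let ?X = "order_complex_top P le" and ?g = "cross_polytope_map P \<kappa> \<sigma>"
  have topspace: "topspace ?X = order_complex_points P le"
    by (simp add: order_complex_top_def)
  have support: "\<exists>p\<in>P. 0 < x p" if "x \<in> order_complex_points P le" for x
  proof (rule ccontr)
    assume "\<not> ?thesis"
    moreover have "sum x P = 1" "\<forall>p. 0 \<le> x p"
      using that by (auto simp: order_complex_points_def)
    ultimately have "\<forall>p\<in>P. x p = 0"
      by (meson order.antisym not_le)
    with \<open>sum x P = 1\<close> show False
      by simp
  qed
  then obtain p where "p \<in> P"
    using False topspace by blast
  then have "0 < N"
    using \<kappa>(1) by fastforce
  have "continuous_map ?X euclideanreal (\<lambda>x. x p)" for p
    unfolding order_complex_top_def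
    by (intro continuous_map_from_subtopology continuous_map_product_projection) simp
  then have "continuous_map ?X euclideanreal (\<lambda>x. ?g x k)" for k
    unfolding cross_polytope_map_def by (intro continuous_intros \<open>finite P\<close>)
  moreover have "?g x k = 0" if "N - 1 < k" for x k
  proof -
    have "k \<noteq> \<kappa> p" if "p \<in> P" for p
      using \<kappa>(1)[OF that] \<open>N - 1 < k\<close> by linarith
    then show ?thesis
      by (auto simp: cross_polytope_map_def cross_polytope_vertex_def intro!: sum.neutral)
  qed
  moreover have "\<exists>k\<le>N - 1. ?g x k \<noteq> 0" if x: "x \<in> topspace ?X" for x
  proof -
    obtain q where q: "q \<in> P" "0 < x q"
      using support x topspace by blast
    have "\<kappa> q \<le> N - 1"
      using \<kappa>(1)[OF q(1)] by linarith
    moreover have "?g x (\<kappa> q) \<noteq> 0"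
      using x topspace q by (intro cross_polytope_map_nonzero[OF \<open>finite P\<close> _ _ _ chain]) auto
    ultimately show ?thesis by blast
  qed
  ultimately have "continuous_map ?X (nsphere (N - 1))
      (\<lambda>x k. ?g x k / sqrt (\<Sum>j\<le>N - 1. (?g x j)\<^sup>2))"
    by (rule continuous_map_normalize_nsphere)
  then have "z2_index ?X (\<lambda>x. x \<circ> \<nu>) \<le> int (N - 1)"
    by (rule z2_index_le)
       (simp only: antipodal_def cross_polytope_map_comp_involution[of P \<nu> \<kappa> \<sigma>, OF \<nu> \<kappa>(2) \<sigma>]
         power2_minus minus_divide_left)
  with \<open>0 < N\<close> show ?thesis by linarith
qed

lemma HomK2_iff_complete_bipartite_sub:
  "(A, B) \<in> HomK2 V E \<longleftrightarrow> complete_bipartite_sub V E A B"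
  by (simp add: HomK2_def complete_bipartite_sub_def)

lemma finite_HomK2: "finite V \<Longrightarrow> finite (HomK2 V E)"
  by (rule finite_subset[of _ "Pow V \<times> Pow V"]) (auto simp: HomK2_def)

lemma swap_in_HomK2:
  "simple_graph V E \<Longrightarrow> p \<in> HomK2 V E \<Longrightarrow> prod.swap p \<in> HomK2 V E"
  by (cases p) (auto simp: HomK2_def simple_graph_def)

lemma HomK2_swap_eq_comp: "HomK2_swap x = x \<circ> prod.swap"
  by (simp add: HomK2_swap_def fun_eq_iff)

lemma proper_coloring_HomK2_disjoint:
  "proper_coloring V E c \<Longrightarrow> (A, B) \<in> HomK2 V E \<Longrightarrow> c ` A \<inter> c ` B = {}"
  by (fastforce simp: proper_coloring_def HomK2_def)

lemma sum_lessThan_block_unique: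
  fixes d :: "nat \<Rightarrow> nat"
  assumes "sum d {..<i} \<le> k" "k < sum d {..<i} + d i"
    and "sum d {..<j} \<le> k" "k < sum d {..<j} + d j"
  shows "i = j"
proof (rule ccontr)
  have block_le: "sum d {..<Suc i'} \<le> sum d {..<j'}" if "i' < j'" for i' j'
    using that by (intro sum_mono2) auto
  assume "i \<noteq> j"
  then consider "i < j" | "j < i" by linarith
  then show False
    by cases (use block_le[of i j] block_le[of j i] assms in auto)
qed

locale colorful_free_graph =
  fixes V :: "'v set" and E :: "'v \<Rightarrow> 'v \<Rightarrow> bool"
    and c :: "nat \<Rightarrow> 'v \<Rightarrow> 'c" and d :: "nat \<Rightarrow> nat" and m :: nat
  assumes simple: "simple_graph V E"
    and proper: "\<And>i. i < m \<Longrightarrow> proper_coloring V E (c i)"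
    and no_colorful: "\<And>A B. complete_bipartite_sub V E A B \<Longrightarrow>
      \<exists>i<m. \<not> contains_colorful_Kpq A B ((d i + 1) div 2 + 1) (d i div 2 + 1) (c i)"
begin

definition colorful :: "nat \<Rightarrow> 'v set \<Rightarrow> 'v set \<Rightarrow> bool" where
  "colorful i A B \<longleftrightarrow> contains_colorful_Kpq A B ((d i + 1) div 2 + 1) (d i div 2 + 1) (c i)"

definition failing :: "'v set \<times> 'v set \<Rightarrow> nat" where
  "failing p = (LEAST i. i < m \<and> \<not> colorful i (fst p) (snd p))"

definition ncolors :: "nat \<Rightarrow> 'v set \<Rightarrow> nat" where
  "ncolors i A = card (c i ` A)"

definition color_rank :: "nat \<Rightarrow> 'v set \<Rightarrow> nat" where
  "color_rank i A = Min (to_nat_on (c i ` V) ` c i ` A)"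

definition level :: "'v set \<times> 'v set \<Rightarrow> nat" where
  "level p = pair_level (ncolors (failing p) (fst p)) (ncolors (failing p) (snd p))"

definition label :: "'v set \<times> 'v set \<Rightarrow> nat" where
  "label p = sum d {..<failing p} + level p - 1"

definition orientation :: "nat \<Rightarrow> 'v set \<Rightarrow> 'v set \<Rightarrow> bool" where
  "orientation i A B = (if ncolors i A = ncolors i B then color_rank i A < color_rank i B
                        else ncolors i B < ncolors i A)"

definition sign :: "'v set \<times> 'v set \<Rightarrow> bool" where
  "sign p = orientation (failing p) (fst p) (snd p)"

lemma finite_V: "finite V"
  using simple by (simp add: simple_graph_def)

lemma HomK2_finite_nonempty:
  assumes "(A, B) \<in> HomK2 V E"
  shows "finite A" "finite B" "A \<noteq> {}" "B \<noteq> {}"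
  using assms finite_V by (auto simp: HomK2_def intro: finite_subset)

lemma colorful_commute: "colorful i A B = colorful i B A"
  using contains_colorful_Kpq_commute by (simp add: colorful_def)

lemma failing_spec:
  assumes "p \<in> HomK2 V E"
  shows "failing p < m" "\<not> colorful (failing p) (fst p) (snd p)"
proof -
  have "\<exists>i. i < m \<and> \<not> colorful i (fst p) (snd p)"
    using assms no_colorful HomK2_iff_complete_bipartite_sub[of "fst p" "snd p"]
    by (auto simp: colorful_def)
  from LeastI_ex[OF this] show "failing p < m" "\<not> colorful (failing p) (fst p) (snd p)"
    by (simp_all add: failing_def)
qed

lemma failing_swap: "failing (B, A) = failing (A, B)"
  using colorful_commute by (simp add: failing_def)

lemma ncolors_ge_1: "(A, B) \<in> HomK2 V E \<Longrightarrow> 1 \<le> ncolors i A \<and> 1 \<le> ncolors i B"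
  using HomK2_finite_nonempty by (simp add: ncolors_def Suc_le_eq card_gt_0_iff)

lemma level_bounds:
  assumes "p \<in> HomK2 V E"
  shows "1 \<le> level p" "level p \<le> d (failing p)"
proof -
  obtain A B where p: "p = (A, B)" by fastforce
  let ?i = "failing p"
  have disjoint: "c ?i ` A \<inter> c ?i ` B = {}"
    using assms failing_spec(1)[OF assms] proper p proper_coloring_HomK2_disjoint by blast
  have "\<not> colorful ?i A B" "\<not> colorful ?i B A"
    using failing_spec(2)[OF assms] colorful_commute p by auto
  then have "\<not> ((d ?i + 1) div 2 + 1 \<le> ncolors ?i A \<and> d ?i div 2 + 1 \<le> ncolors ?i B)"
    and "\<not> (d ?i div 2 + 1 \<le> ncolors ?i A \<and> (d ?i + 1) div 2 + 1 \<le> ncolors ?i B)"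
    using HomK2_finite_nonempty[of A B] assms disjoint p
    by (auto simp: colorful_def ncolors_def Int_commute intro!: contains_colorful_KpqI)
  then show "level p \<le> d ?i"
    by (simp add: level_def p pair_level_le)
  show "1 \<le> level p"
      using ncolors_ge_1[of A B "failing p"] pair_level_ge_1 assms p by (simp add: level_def)
qed

lemma label_less: "p \<in> HomK2 V E \<Longrightarrow> label p < sum d {..<m}"
  using level_bounds[of p] failing_spec(1)[of p] sum_mono2[of "{..<m}" "{..<Suc (failing p)}" d]
  by (fastforce simp: label_def)

lemma label_swap: "label (prod.swap p) = label p"
  by (cases p) (simp add: label_def level_def failing_swap pair_level_commute)

lemma color_rank_neq:
  assumes "(A, B) \<in> HomK2 V E" "i < m"
  shows "color_rank i A \<noteq> color_rank i B"
proof -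
  let ?r = "to_nat_on (c i ` V)"
  have "inj_on ?r (c i ` V)"
    using finite_V by (intro inj_on_to_nat_on countable_finite) simp
  moreover have "A \<subseteq> V" "B \<subseteq> V"
    using assms(1) by (auto simp: HomK2_def)
  ultimately have "?r ` c i ` A \<inter> ?r ` c i ` B = {}"
    using proper_coloring_HomK2_disjoint[OF proper[OF assms(2)] assms(1)]
    by (metis image_empty image_mono inj_on_image_Int)
  then show ?thesis
    using HomK2_finite_nonempty[OF assms(1)] Min_in[of "?r ` c i ` A"] Min_in[of "?r ` c i ` B"]
    unfolding color_rank_def by (metis disjoint_iff finite_imageI image_is_empty)
qed

lemma sign_swap: "p \<in> HomK2 V E \<Longrightarrow> sign (prod.swap p) \<longleftrightarrow> \<not> sign p"
  using color_rank_neq[of "fst p" "snd p" "failing p"] failing_spec(1)[of p]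
  by (cases p) (auto simp: sign_def orientation_def failing_swap)

lemma sign_chain:
  assumes p: "p \<in> HomK2 V E" and q: "q \<in> HomK2 V E"
    and "hom_le p q" and "label p = label q"
  shows "sign p = sign q"
proof -
  have same_failing: "failing p = failing q"
    using sum_lessThan_block_unique[of d "failing p" "label p" "failing q"]
      level_bounds[OF p] level_bounds[OF q] \<open>label p = label q\<close>
    by (simp add: label_def)
  define i where "i = failing p"
  have "level p = level q"
    using \<open>label p = label q\<close> level_bounds[OF p] level_bounds[OF q] same_failing
    by (simp add: label_def)
  then have same_level: "pair_level (ncolors i (fst p)) (ncolors i (snd p))
                       = pair_level (ncolors i (fst q)) (ncolors i (snd q))"
    by (simp add: level_def i_def same_failing)
  have sub: "c i ` fst p \<subseteq> c i ` fst q" "c i ` snd p \<subseteq> c i ` snd q"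
    using \<open>hom_le p q\<close> by (auto simp: hom_le_def)
  have fin: "finite (c i ` fst q)" "finite (c i ` snd q)"
    using HomK2_finite_nonempty[of "fst q" "snd q"] q by simp_all
  have mono: "ncolors i (fst p) \<le> ncolors i (fst q)" "ncolors i (snd p) \<le> ncolors i (snd q)"
    using card_mono[OF fin(1) sub(1)] card_mono[OF fin(2) sub(2)] by (simp_all add: ncolors_def)
  note shape = pair_level_eq_imp_same_shape[OF mono _ same_level]
  have "orientation i (fst p) (snd p) = orientation i (fst q) (snd q)"
  proof (cases "ncolors i (fst p) = ncolors i (snd p)")
    case True
    then have "c i ` fst p = c i ` fst q" "c i ` snd p = c i ` snd q"
      using shape ncolors_ge_1[of "fst p" "snd p"] p card_subset_eq[OF fin(1) sub(1)]
        card_subset_eq[OF fin(2) sub(2)]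
      by (auto simp: ncolors_def)
    then show ?thesis
      by (simp add: orientation_def ncolors_def color_rank_def)
  next
    case False
    then show ?thesis
      using shape ncolors_ge_1[of "fst p" "snd p"] p by (auto simp: orientation_def)
  qed
  then show ?thesis
    by (simp add: sign_def i_def same_failing)
qed

lemma ind_HomK2_less: "ind_HomK2 V E < int (sum d {..<m})"
  unfolding ind_HomK2_def HomK2_top_def HomK2_swap_eq_comp
proof (rule z2_index_order_complex_less[where \<kappa> = label and \<sigma> = sign])
  show "finite (HomK2 V E)"
    using finite_V by (rule finite_HomK2)
qed (auto simp: swap_in_HomK2[OF simple] label_less label_swap sign_swap sign_chain)

end

theorem theorem3p3:
  fixes V :: "'v set" and E :: "'v \<Rightarrow> 'v \<Rightarrow> bool"
    and c :: "nat \<Rightarrow> 'v \<Rightarrow> 'c" and d :: "nat \<Rightarrow> nat" and m :: nat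
  assumes "simple_graph V E"
    and "\<forall>i<m. proper_coloring V E (c i)"
    and "\<forall>i<m. d i > 0"
    and "int (\<Sum>i<m. d i) = ind_HomK2 V E"
  shows "\<exists>X Y. complete_bipartite_sub V E X Y \<and>
           (\<forall>i<m. contains_colorful_Kpq X Y (nat \<lceil>real (d i) / 2\<rceil> + 1)
                                           (nat \<lfloor>real (d i) / 2\<rfloor> + 1) (c i))"
proof (rule ccontr)
  assume "\<not> ?thesis"
  then have "colorful_free_graph V E c d m"
    using assms(1,2) by unfold_locales (auto simp: nat_ceiling_half nat_floor_half)
  then have "ind_HomK2 V E < int (\<Sum>i<m. d i)"
    by (rule colorful_free_graph.ind_HomK2_less)
  with assms(4) show False
    by simp
qed

end
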